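(* Let $t,b,k$ be positive integers with $3\le k\le t$ and $\ell=bk/(t(t-1))$ an integer, and let $d^*$ be a circular neighbor-balanced design in $\Omega_{(t,b,k)}$. Then under model $(\mathcal{M}1)$ the information matrix for the total effects $\phi=\tau+\lambda$ is $$C_{d^*}[\phi]=\frac{b(k-2)}{2(t-1)}\,Q_t,\qquad Q_t=I_t-t^{-1}J_t.$$
   Context: Designs: $t$ treatments, $b$ linear blocks; block $i$ has inner plots $j=1,\dots,k$ and border plots $j=0,k+1$; $d(i,j)$ is the treatment on plot $(i,j)$; circular means $d(i,0)=d(i,k)$, $d(i,k+1)=d(i,1)$. $\Omega_{(t,b,k)}$ is the set of circular designs with $t$ treatments and $b$ blocks of length $k$. $J_t$ is the $t\times t$ all-ones matrix. Model $(\mathcal{M}1)$: responses $Y_{i,j}$ ($1\le i\le b$, $1\le j\le k$) uncorrelated with common variance, $\mathbb{E}(Y_{i,j})=\beta_i+\tau_{d(i,j)}+\lambda_{d(i,j-1)}$, i.e. $\mathbb{E}(Y)=B\beta+T_d\tau+L_d\lambda$ with $B$ block incidence and $T_d,L_d$ ($bk\times t$) having a single $1$ in row $(i,j)$ at column $d(i,j)$, resp. $d(i,j-1)$. $\phi=K'\alpha$ with $\alpha=(\tau',\lambda')'$, $K=\mathbf 1_2\otimes I_t$. Information matrix: with $A=(T_d\mid L_d)$, $X^+$ the Moore–Penrose inverse, $\mathrm{pr}_{(X)}=X(X'X)^+X'$, $\mathrm{pr}^\perp_{(X)}=I-\mathrm{pr}_{(X)}$, $M=I-K(K'K)^+K'$,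 $X_1=AK(K'K)^+$, $X_2=(AM\mid B)$: $C_d[\phi]=X_1'\mathrm{pr}^\perp_{(X_2)}X_1$. CNBD: a design in $\Omega_{(t,b,k)}$ that is binary (each treatment at most once among the inner plots of each block), a balanced block design (equal replication and each unordered pair of distinct treatments together in the same number of blocks), and such that for each ordered pair $(a,c)$ of distinct treatments exactly $\ell$ inner plots $(i,j)$ have $d(i,j)=a$, $d(i,j+1)=c$. *)

theory Defs
  imports "Jordan_Normal_Form.Matrix"
begin

text \<open>Moore-Penrose inverse of a real matrix: the unique X satisfying the four Penrose
  equations (for real matrices the conjugate transpose is the transpose).\<close>
definition mp_inv :: "real mat \<Rightarrow> real mat" where
  "mp_inv A = (THE X. X \<in> carrier_mat (dim_col A) (dim_row A) \<and>
       A * X * A = A \<and> X * A * X = X \<and>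
       transpose_mat (A * X) = A * X \<and> transpose_mat (X * A) = X * A)"

definition pr_mat :: "real mat \<Rightarrow> real mat" where
  "pr_mat X = X * mp_inv (transpose_mat X * X) * transpose_mat X"

definition pr_perp :: "real mat \<Rightarrow> real mat" where
  "pr_perp X = 1\<^sub>m (dim_row X) - pr_mat X"

definition hcat :: "real mat \<Rightarrow> real mat \<Rightarrow> real mat" where
  "hcat X Y = mat (dim_row X) (dim_col X + dim_col Y)
     (\<lambda>(r, c). if c < dim_col X then X $$ (r, c) else Y $$ (r, c - dim_col X))"

definition J_mat :: "nat \<Rightarrow> real mat" where
  "J_mat n = mat n n (\<lambda>_. 1)"

text \<open>Blocks i < b, inner plots j < k (0-indexed; plot j here is plot j+1 of the
  paper), treatments 0..t-1. A circular design is determined by its inner plots: the left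
  border plot of block i carries d i (k-1), the right border plot carries d i 0.
  Hence the left neighbour of inner plot j is plot (j + k - 1) mod k and the right
  neighbour is plot (j + 1) mod k.\<close>
definition design :: "nat \<Rightarrow> nat \<Rightarrow> nat \<Rightarrow> (nat \<Rightarrow> nat \<Rightarrow> nat) \<Rightarrow> bool" where
  "design t b k d \<longleftrightarrow> (\<forall>i<b. \<forall>j<k. d i j < t)"

definition left_nb :: "nat \<Rightarrow> (nat \<Rightarrow> nat \<Rightarrow> nat) \<Rightarrow> nat \<Rightarrow> nat \<Rightarrow> nat" where
  "left_nb k d i j = d i ((j + k - 1) mod k)"

definition right_nb :: "nat \<Rightarrow> (nat \<Rightarrow> nat \<Rightarrow> nat) \<Rightarrow> nat \<Rightarrow> nat \<Rightarrow> nat" where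
  "right_nb k d i j = d i ((j + 1) mod k)"

definition binary_design :: "nat \<Rightarrow> nat \<Rightarrow> (nat \<Rightarrow> nat \<Rightarrow> nat) \<Rightarrow> bool" where
  "binary_design b k d \<longleftrightarrow> (\<forall>i<b. inj_on (d i) {..<k})"

definition balanced_block :: "nat \<Rightarrow> nat \<Rightarrow> nat \<Rightarrow> (nat \<Rightarrow> nat \<Rightarrow> nat) \<Rightarrow> bool" where
  "balanced_block t b k d \<longleftrightarrow>
     (\<exists>r. \<forall>a<t. card {(i, j). i < b \<and> j < k \<and> d i j = a} = r) \<and>
     (\<exists>\<mu>. \<forall>a<t. \<forall>c<t. a \<noteq> c \<longrightarrow>
         card {i. i < b \<and> a \<in> d i ` {..<k} \<and> c \<in> d i ` {..<k}} = \<mu>)"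

definition neighbor_balanced :: "nat \<Rightarrow> nat \<Rightarrow> nat \<Rightarrow> nat \<Rightarrow> (nat \<Rightarrow> nat \<Rightarrow> nat) \<Rightarrow> bool" where
  "neighbor_balanced t b k l d \<longleftrightarrow>
     (\<forall>a<t. \<forall>c<t. a \<noteq> c \<longrightarrow>
        card {(i, j). i < b \<and> j < k \<and> d i j = a \<and> right_nb k d i j = c} = l)"

definition CNBD :: "nat \<Rightarrow> nat \<Rightarrow> nat \<Rightarrow> nat \<Rightarrow> (nat \<Rightarrow> nat \<Rightarrow> nat) \<Rightarrow> bool" where
  "CNBD t b k l d \<longleftrightarrow> design t b k d \<and> binary_design b k d \<and>
     balanced_block t b k d \<and> neighbor_balanced t b k l d"

text \<open>Model (M1) matrices. Observation (i,j) (block i, inner plot j) is row i*k + j.\<close>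
definition B_mat :: "nat \<Rightarrow> nat \<Rightarrow> real mat" where
  "B_mat b k = mat (b * k) b (\<lambda>(r, c). if r div k = c then 1 else 0)"

definition T_mat :: "nat \<Rightarrow> nat \<Rightarrow> nat \<Rightarrow> (nat \<Rightarrow> nat \<Rightarrow> nat) \<Rightarrow> real mat" where
  "T_mat t b k d = mat (b * k) t (\<lambda>(r, c). if d (r div k) (r mod k) = c then 1 else 0)"

definition L_mat :: "nat \<Rightarrow> nat \<Rightarrow> nat \<Rightarrow> (nat \<Rightarrow> nat \<Rightarrow> nat) \<Rightarrow> real mat" where
  "L_mat t b k d = mat (b * k) t (\<lambda>(r, c). if left_nb k d (r div k) (r mod k) = c then 1 else 0)"

text \<open>K = 1_2 \<otimes> I_t (a 2t x t matrix).\<close>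
definition K_mat :: "nat \<Rightarrow> real mat" where
  "K_mat t = mat (2 * t) t (\<lambda>(r, c). if r mod t = c then 1 else 0)"

definition info_matrix :: "nat \<Rightarrow> nat \<Rightarrow> nat \<Rightarrow> (nat \<Rightarrow> nat \<Rightarrow> nat) \<Rightarrow> real mat" where
  "info_matrix t b k d =
    (let A = hcat (T_mat t b k d) (L_mat t b k d);
         K = K_mat t;
         KKp = mp_inv (transpose_mat K * K);
         M = 1\<^sub>m (2 * t) - K * KKp * transpose_mat K;
         X1 = A * K * KKp;
         X2 = hcat (A * M) (B_mat b k)
     in transpose_mat X1 * pr_perp X2 * X1)"

end

theory Submission
  imports Defs
begin

(*
  Put A = (T | L). Since K'K = 2 I, the model matrices are X1 = A K (K'K)^+ = (T + L)/2 and
  X2 = (A M | B) = ((T - L)/2 | -(T - L)/2 | B).  For a CNBD, binarity and circularity give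
  T'T = L'L = r I and T'B = L'B = N, and neighbour balance gives T'L = L'T = l (J - I), where
  r = l (t - 1).  Hence X1 is orthogonal to T - L, and X2'X2 is the block matrix
  [[E, -E, 0], [-E, E, 0], [0, 0, k I]] with E = (l t / 2) (I - J / t), whose Moore-Penrose
  inverse has the same shape and is verified through the Penrose equations.  Consequently
  C = X1'X1 - N N' / k, and the balance N N' = (r - lambda) I + lambda J gives the result.
*)

lemma index_mult_mat_sum:
  "i < dim_row A \<Longrightarrow> j < dim_col B \<Longrightarrow> dim_col A = dim_row B \<Longrightarrow>
   (A * B) $$ (i, j) = (\<Sum>p<dim_row B. A $$ (i, p) * B $$ (p, j))"
  by (simp add: scalar_prod_def atLeast0LessThan)

lemma index_transpose_mult_sum:
  "i < dim_col A \<Longrightarrow> j < dim_col B \<Longrightarrow> dim_row A = dim_row B \<Longrightarrow>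
   (transpose_mat A * B) $$ (i, j) = (\<Sum>r<dim_row B. A $$ (r, i) * B $$ (r, j))"
  by (subst index_mult_mat_sum) auto

lemma transpose_mult3:
  assumes A: "A \<in> carrier_mat n\<^sub>1 n\<^sub>2" and B: "B \<in> carrier_mat n\<^sub>2 n\<^sub>3"
    and C: "C \<in> carrier_mat n\<^sub>3 n\<^sub>4"
  shows "transpose_mat (A * B * C) =
    transpose_mat C * transpose_mat B * (transpose_mat A :: 'a :: comm_semiring_0 mat)"
proof -
  have "transpose_mat (A * B * C) = transpose_mat C * transpose_mat (A * B)"
    by (rule transpose_mult[OF mult_carrier_mat[OF A B] C])
  also have "\<dots> = transpose_mat C * (transpose_mat B * transpose_mat A)"
    by (simp only: transpose_mult[OF A B])
  finally show ?thesis using A B C by simp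
qed

lemma dim_hcat [simp]:
  "dim_row (hcat X Y) = dim_row X" "dim_col (hcat X Y) = dim_col X + dim_col Y"
  by (simp_all add: hcat_def)

lemma index_hcat [simp]:
  "r < dim_row X \<Longrightarrow> c < dim_col X + dim_col Y \<Longrightarrow>
   hcat X Y $$ (r, c) = (if c < dim_col X then X $$ (r, c) else Y $$ (r, c - dim_col X))"
  by (simp add: hcat_def)

section \<open>Moore-Penrose inverses\<close>

definition penrose_inverse :: "'a :: comm_semiring_0 mat \<Rightarrow> 'a mat \<Rightarrow> bool" where
  "penrose_inverse A X \<longleftrightarrow> X \<in> carrier_mat (dim_col A) (dim_row A) \<and>
     A * X * A = A \<and> X * A * X = X \<and>
     transpose_mat (A * X) = A * X \<and> transpose_mat (X * A) = X * A"

lemma penrose_inverse_transpose: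
  assumes "penrose_inverse A X"
  shows "penrose_inverse (transpose_mat A) (transpose_mat X)"
proof -
  define m n where "m = dim_row A" and "n = dim_col A"
  have A: "A \<in> carrier_mat m n" and X: "X \<in> carrier_mat n m"
    using assms by (auto simp: penrose_inverse_def m_def n_def)
  note P = assms[unfolded penrose_inverse_def]
  have AX: "transpose_mat X * transpose_mat A = A * X"
    using P transpose_mult[OF A X] by simp
  have XA: "transpose_mat A * transpose_mat X = X * A"
    using P transpose_mult[OF X A] by simp
  show ?thesis
    using P transpose_mult3[OF A X A] transpose_mult3[OF X A X] A X
    by (simp add: penrose_inverse_def AX XA)
qed

lemma penrose_inverse_eq_mult_mult:
  assumes X: "penrose_inverse A X" and Y: "penrose_inverse A Y"
  shows "X = X * A * Y"
proof -
  define m n where "m = dim_row A" and "n = dim_col A"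
  have A: "A \<in> carrier_mat m n" and Xc: "X \<in> carrier_mat n m" and Yc: "Y \<in> carrier_mat n m"
    using X Y by (auto simp: penrose_inverse_def m_def n_def)
  note PX = X[unfolded penrose_inverse_def] and PY = Y[unfolded penrose_inverse_def]
  have "transpose_mat A = transpose_mat A * transpose_mat Y * transpose_mat A"
    using transpose_mult3[OF A Yc A] PY by simp
  also have "\<dots> = transpose_mat A * (A * Y)"
    using transpose_mult[OF A Yc] PY A Yc by simp
  finally have At: "transpose_mat A = transpose_mat A * (A * Y)" .
  have "X = X * transpose_mat (A * X)" using PX A Xc by simp
  also have "\<dots> = X * (transpose_mat X * transpose_mat A)"
    using transpose_mult[OF A Xc] by simp
  also have "\<dots> = X * (transpose_mat X * (transpose_mat A * (A * Y)))"
    by (simp only: At[symmetric])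
  also have "\<dots> = X * (transpose_mat X * transpose_mat A) * (A * Y)"
  proof -
    have tX: "transpose_mat X \<in> carrier_mat m n" and tA: "transpose_mat A \<in> carrier_mat n m"
      and AY: "A * Y \<in> carrier_mat m m" using A Xc Yc by auto
    show ?thesis
      by (simp only: assoc_mult_mat[OF Xc mult_carrier_mat[OF tX tA] AY] assoc_mult_mat[OF tX tA AY])
  qed
  also have "\<dots> = X * transpose_mat (A * X) * (A * Y)"
    using transpose_mult[OF A Xc] by simp
  also have "\<dots> = X * A * Y" using PX A Xc Yc by simp
  finally show ?thesis .
qed

lemma penrose_inverse_unique:
  assumes X: "penrose_inverse A X" and Y: "penrose_inverse A Y"
  shows "X = Y"
proof -
  define m n where "m = dim_row A" and "n = dim_col A"
  have A: "A \<in> carrier_mat m n" and Xc: "X \<in> carrier_mat n m" and Yc: "Y \<in> carrier_mat n m"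
    using X Y by (auto simp: penrose_inverse_def m_def n_def)
  \<comment> \<open>The second half of the classical argument is the first half for the transposes.\<close>
  have "transpose_mat Y = transpose_mat Y * transpose_mat A * transpose_mat X"
    using assms by (intro penrose_inverse_eq_mult_mult penrose_inverse_transpose)
  then have "Y = transpose_mat (transpose_mat Y * transpose_mat A * transpose_mat X)"
    by (metis transpose_transpose)
  also have "\<dots> = X * A * Y"
    using transpose_mult3[of "transpose_mat Y" m n "transpose_mat A" m "transpose_mat X" n] A Xc Yc
    by simp
  finally show ?thesis using penrose_inverse_eq_mult_mult[OF X Y] by simp
qed

lemma mp_inv_eqI: "penrose_inverse A X \<Longrightarrow> mp_inv A = X"
  unfolding mp_inv_def penrose_inverse_def[symmetric]
  using penrose_inverse_unique by blast

lemma mp_inv_smult_one: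
  assumes "c \<noteq> 0"
  shows "mp_inv (c \<cdot>\<^sub>m 1\<^sub>m n) = (1 / c) \<cdot>\<^sub>m 1\<^sub>m n"
proof (rule mp_inv_eqI)
  have "(x \<cdot>\<^sub>m 1\<^sub>m n) * (y \<cdot>\<^sub>m 1\<^sub>m n) = (x * y) \<cdot>\<^sub>m (1\<^sub>m n :: real mat)" for x y
    by (rule eq_matI) (auto simp: index_mult_mat_sum)
  moreover have "transpose_mat (x \<cdot>\<^sub>m 1\<^sub>m n) = x \<cdot>\<^sub>m (1\<^sub>m n :: real mat)" for x
    by (rule eq_matI) auto
  ultimately show "penrose_inverse (c \<cdot>\<^sub>m 1\<^sub>m n) ((1 / c) \<cdot>\<^sub>m 1\<^sub>m n)"
    using assms by (simp add: penrose_inverse_def)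
qed

lemma sum_lessThan_add:
  fixes m n :: nat
  shows "(\<Sum>p<m + n. f p) = (\<Sum>p<m. f p) + (\<Sum>p<n. f (m + p) :: 'a :: comm_monoid_add)"
  by (induction n) (simp_all add: add.assoc)

lemma sum_lessThan_mult:
  fixes b k :: nat
  shows "(\<Sum>r<b * k. f r) = (\<Sum>i<b. \<Sum>j<k. f (i * k + j) :: 'a :: comm_monoid_add)"
proof (induction b)
  case (Suc b)
  have "(\<Sum>r<Suc b * k. f r) = (\<Sum>r<b * k + k. f r)"
    by (simp add: add.commute)
  then show ?case by (simp add: sum_lessThan_add Suc)
qed simp

lemma sum_lessThan_double_mod:
  fixes t :: nat
  shows "(\<Sum>q<2 * t. f (q mod t)) = 2 * (\<Sum>q<t. f q :: 'a :: comm_semiring_1)"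
proof -
  have "(\<Sum>q<t + t. f (q mod t)) = (\<Sum>q<t. f q) + (\<Sum>q<t. f q)"
    unfolding sum_lessThan_add by (intro arg_cong2[where f = "(+)"] sum.cong) auto
  then show ?thesis by (simp add: mult_2)
qed

lemma sum_rotate_mod:
  fixes k s :: nat
  assumes "0 < k"
  shows "(\<Sum>j<k. f ((j + s) mod k)) = (\<Sum>j<k. f j :: 'a :: comm_monoid_add)"
proof (induction s)
  case (Suc s)
  obtain m where k: "k = Suc m" using assms by (cases k) auto
  define g where "g x = f ((x + s) mod k)" for x
  have "(\<Sum>j<k. f ((j + Suc s) mod k)) = (\<Sum>j<m. g (Suc j mod Suc m)) + g (Suc m mod Suc m)"
  proof -
    have "Suc (m + s) mod Suc m = s mod Suc m"
      using mod_add_self1[of "Suc m" s] by simp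
    then show ?thesis by (simp add: g_def k mod_add_left_eq ac_simps)
  qed
  also have "\<dots> = (\<Sum>j<k. g j)"
    unfolding k sum.lessThan_Suc_shift by (simp add: add.commute)
  finally show ?case using Suc by (simp add: g_def)
qed simp

lemma sum_if_eq_inj_on:
  assumes "inj_on f A" and "finite A"
  shows "(\<Sum>j\<in>A. if f j = a then 1 else 0 :: 'b :: semiring_1) = (if a \<in> f ` A then 1 else 0)"
proof -
  have "{j \<in> A. f j = a} = (if a \<in> f ` A then {the_inv_into A f a} else {})"
    using assms(1) by (auto simp: the_inv_into_f_f inj_on_def)
  then show ?thesis
    using assms(2) by (simp add: sum.inter_filter[symmetric])
qed

lemma of_nat_card_pairs_eq_sum:
  fixes b k :: nat
  shows "of_nat (card {(i, j). i < b \<and> j < k \<and> P i j}) =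
    (\<Sum>i<b. \<Sum>j<k. if P i j then 1 else 0 :: 'a :: semiring_1)"
proof -
  have "{(i, j). i < b \<and> j < k \<and> P i j} = (SIGMA i:{..<b}. {j \<in> {..<k}. P i j})"
    by auto
  then have "card {(i, j). i < b \<and> j < k \<and> P i j} = (\<Sum>i<b. card {j \<in> {..<k}. P i j})"
    by simp
  moreover have "of_nat (card {j \<in> {..<k}. P i j}) = (\<Sum>j<k. if P i j then 1 else 0 :: 'a)" for i
    by (simp add: sum.inter_filter[symmetric])
  ultimately show ?thesis by simp
qed

section \<open>The matrix K and signed block matrices\<close>

lemma K_mat_carrier: "K_mat t \<in> carrier_mat (2 * t) t"
  by (simp add: K_mat_def)

lemma mult_K_mat:
  assumes "A \<in> carrier_mat n (2 * t)"
  shows "A * K_mat t = mat n t (\<lambda>(r, a). A $$ (r, a) + A $$ (r, t + a))"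
proof (rule eq_matI)
  fix r a assume "r < dim_row (mat n t (\<lambda>(r, a). A $$ (r, a) + A $$ (r, t + a)))"
    and "a < dim_col (mat n t (\<lambda>(r, a). A $$ (r, a) + A $$ (r, t + a)))"
  then have r: "r < n" and a: "a < t" by auto
  have "(A * K_mat t) $$ (r, a) = (\<Sum>p<t + t. A $$ (r, p) * K_mat t $$ (p, a))"
    using assms r a by (subst index_mult_mat_sum) (auto simp: K_mat_def mult_2)
  also have "\<dots> =
      (\<Sum>p<t. if p = a then A $$ (r, p) else 0) + (\<Sum>p<t. if p = a then A $$ (r, t + p) else 0)"
    unfolding sum_lessThan_add using a by (intro arg_cong2[where f = "(+)"] sum.cong) (auto simp: K_mat_def)
  finally show "(A * K_mat t) $$ (r, a) = mat n t (\<lambda>(r, a). A $$ (r, a) + A $$ (r, t + a)) $$ (r, a)"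
    using r a by simp
qed (use assms in \<open>auto simp: K_mat_def\<close>)

lemma transpose_K_mat_mult_K_mat: "transpose_mat (K_mat t) * K_mat t = 2 \<cdot>\<^sub>m 1\<^sub>m t"
  by (subst mult_K_mat) (auto simp: K_mat_def)

lemma mult_transpose_K_mat:
  assumes "Y \<in> carrier_mat n t"
  shows "Y * transpose_mat (K_mat t) = mat n (2 * t) (\<lambda>(r, q). Y $$ (r, q mod t))"
proof (rule eq_matI)
  fix r q assume "r < dim_row (mat n (2 * t) (\<lambda>(r, q). Y $$ (r, q mod t)))"
    and "q < dim_col (mat n (2 * t) (\<lambda>(r, q). Y $$ (r, q mod t)))"
  then have r: "r < n" and q: "q < 2 * t" by auto
  then have "q mod t < t" by simp
  then have "(\<Sum>a<t. Y $$ (r, a) * K_mat t $$ (q, a)) = Y $$ (r, q mod t)"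
    using q by (simp add: K_mat_def if_distrib[of "(*) _"] eq_commute[of "q mod t"] cong: if_cong)
  then show "(Y * transpose_mat (K_mat t)) $$ (r, q) =
      mat n (2 * t) (\<lambda>(r, q). Y $$ (r, q mod t)) $$ (r, q)"
    using assms r q by (subst index_mult_mat_sum) (auto simp: K_mat_def)
qed (use assms in \<open>auto simp: K_mat_def\<close>)

definition block_sign :: "nat \<Rightarrow> nat \<Rightarrow> real" where
  "block_sign t p = (if p < t then 1 else -1)"

(* The (2t+b)-square matrix [[E, -E, 0], [-E, E, 0], [0, 0, \<gamma> I_b]] with E = \<alpha> I_t + \<beta> J_t. *)
definition signed_block_mat :: "nat \<Rightarrow> nat \<Rightarrow> real \<Rightarrow> real \<Rightarrow> real \<Rightarrow> real mat" where
  "signed_block_mat t b \<alpha> \<beta> \<gamma> = mat (2 * t + b) (2 * t + b) (\<lambda>(p, q).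
     if p < 2 * t \<and> q < 2 * t
     then block_sign t p * block_sign t q * ((if p mod t = q mod t then \<alpha> else 0) + \<beta>)
     else if p = q then \<gamma> else 0)"

lemma signed_block_mat_carrier:
  "signed_block_mat t b \<alpha> \<beta> \<gamma> \<in> carrier_mat (2 * t + b) (2 * t + b)"
  by (simp add: signed_block_mat_def)

lemma transpose_signed_block_mat:
  "transpose_mat (signed_block_mat t b \<alpha> \<beta> \<gamma>) = signed_block_mat t b \<alpha> \<beta> \<gamma>"
  by (rule eq_matI) (auto simp: signed_block_mat_def)

lemma sum_delta_plus_const_mult:
  fixes i j t :: nat
  assumes "i < t" and "j < t"
  shows "(\<Sum>x<t. ((if i = x then \<alpha> else 0) + \<beta>) * ((if x = j then \<alpha>' else 0) + \<beta>')) =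
    (if i = j then \<alpha> * \<alpha>' else 0) + \<alpha> * \<beta>' + \<beta> * \<alpha>' + real t * \<beta> * (\<beta>' :: real)"
  using assms
  by (simp add: ring_distribs sum.distrib if_distrib[of "(*) _"] if_distrib[of "\<lambda>x. x * _"]
      cong: if_cong)

lemma signed_block_mat_mult:
  assumes "0 < t"
  shows "signed_block_mat t b \<alpha> \<beta> \<gamma> * signed_block_mat t b \<alpha>' \<beta>' \<gamma>' =
    signed_block_mat t b (2 * \<alpha> * \<alpha>') (2 * (\<alpha> * \<beta>' + \<beta> * \<alpha>' + real t * \<beta> * \<beta>'))
      (\<gamma> * \<gamma>')"
    (is "?P * ?P' = ?Q")
proof (rule eq_matI)
  fix p s assume "p < dim_row ?Q" "s < dim_col ?Q"
  then have p: "p < 2 * t + b" and s: "s < 2 * t + b" by (auto simp: signed_block_mat_def)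
  define f where "f q = ?P $$ (p, q) * ?P' $$ (q, s)" for q
  have "(?P * ?P') $$ (p, s) = (\<Sum>q<2 * t + b. f q)"
    unfolding f_def using p s by (subst index_mult_mat_sum) (auto simp: signed_block_mat_def)
  also have "\<dots> = (\<Sum>q<2 * t. f q) + (\<Sum>q<b. f (2 * t + q))"
    by (rule sum_lessThan_add)
  also have "\<dots> = ?Q $$ (p, s)"
  proof (cases "p < 2 * t \<and> s < 2 * t")
    case True
    define g where
      "g x = ((if p mod t = x then \<alpha> else 0) + \<beta>) * ((if x = s mod t then \<alpha>' else 0) + \<beta>')" for x
    have "f q = block_sign t p * block_sign t s * g (q mod t)" if "q < 2 * t" for q
      using True that by (simp add: f_def g_def signed_block_mat_def block_sign_def)
    then have "(\<Sum>q<2 * t. f q) = block_sign t p * block_sign t s * (2 * (\<Sum>x<t. g x))"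
      by (simp add: sum_distrib_left[symmetric] sum_lessThan_double_mod)
    moreover have "(\<Sum>x<t. g x) =
        (if p mod t = s mod t then \<alpha> * \<alpha>' else 0) + \<alpha> * \<beta>' + \<beta> * \<alpha>' + real t * \<beta> * \<beta>'"
      unfolding g_def using assms by (intro sum_delta_plus_const_mult) simp_all
    moreover have "f (2 * t + q) = 0" if "q < b" for q
      using True that by (simp add: f_def signed_block_mat_def)
    ultimately show ?thesis
      using True p s by (simp add: signed_block_mat_def algebra_simps)
  next
    case False
    have "f q = 0" if "q < 2 * t" for q
      using False that p s by (auto simp: f_def signed_block_mat_def)
    moreover have "(\<Sum>q<b. f (2 * t + q)) =
        (\<Sum>q<b. if q = p - 2 * t then (if p = s then \<gamma> * \<gamma>' else 0) else 0)"
      using False p s by (intro sum.cong) (auto simp: f_def signed_block_mat_def)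
    ultimately show ?thesis
      using False p s by (auto simp: signed_block_mat_def)
  qed
  finally show "(?P * ?P') $$ (p, s) = ?Q $$ (p, s)" .
qed (auto simp: signed_block_mat_def)

lemma penrose_inverse_signed_block_mat:
  assumes t: "0 < t" and "\<alpha> \<noteq> 0" and "\<gamma> \<noteq> 0"
  shows "penrose_inverse (signed_block_mat t b \<alpha> (- \<alpha> / real t) \<gamma>)
    (signed_block_mat t b (1 / (4 * \<alpha>)) (- 1 / (4 * \<alpha> * real t)) (1 / \<gamma>))"
    (is "penrose_inverse ?S ?G")
proof -
  have params: "x = x' \<Longrightarrow> y = y' \<Longrightarrow> z = z' \<Longrightarrow>
      signed_block_mat t b x y z = signed_block_mat t b x' y' z'" for x y z x' y' z'
    by simp
  have SG: "?S * ?G = signed_block_mat t b (1 / 2) (- 1 / (2 * real t)) 1"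
    and GS: "?G * ?S = signed_block_mat t b (1 / 2) (- 1 / (2 * real t)) 1"
    unfolding signed_block_mat_mult[OF t] using assms
    by (intro params; simp add: field_simps)+
  have "?S * ?G * ?S = ?S" and "?G * ?S * ?G = ?G"
    unfolding SG GS signed_block_mat_mult[OF t] using assms
    by (intro params; simp add: field_simps power2_eq_square)+
  then show ?thesis
    unfolding penrose_inverse_def SG GS transpose_signed_block_mat
    by (simp add: signed_block_mat_def)
qed

lemma mult_signed_block_mat_zero_cols:
  assumes W: "W \<in> carrier_mat n (2 * t + b)"
    and zero: "\<And>i p. i < n \<Longrightarrow> p < 2 * t \<Longrightarrow> W $$ (i, p) = 0"
  shows "W * signed_block_mat t b \<alpha> \<beta> \<gamma> = \<gamma> \<cdot>\<^sub>m W"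
proof (rule eq_matI)
  fix i q assume "i < dim_row (\<gamma> \<cdot>\<^sub>m W)" "q < dim_col (\<gamma> \<cdot>\<^sub>m W)"
  then have i: "i < n" and q: "q < 2 * t + b" using W by auto
  have "(W * signed_block_mat t b \<alpha> \<beta> \<gamma>) $$ (i, q) =
      (\<Sum>p<2 * t + b. W $$ (i, p) * signed_block_mat t b \<alpha> \<beta> \<gamma> $$ (p, q))"
    using W i q by (subst index_mult_mat_sum) (auto simp: signed_block_mat_def)
  also have "\<dots> = (\<Sum>p<2 * t + b. if p = q then \<gamma> * W $$ (i, q) else 0)"
    using i q zero by (intro sum.cong) (auto simp: signed_block_mat_def)
  finally show "(W * signed_block_mat t b \<alpha> \<beta> \<gamma>) $$ (i, q) = (\<gamma> \<cdot>\<^sub>m W) $$ (i, q)"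
    using W i q by simp
qed (use W in \<open>auto simp: signed_block_mat_def\<close>)

lemma transpose_mult_pr_perp_mult:
  assumes X: "X \<in> carrier_mat n m" and Z: "Z \<in> carrier_mat n p"
    and G: "mp_inv (transpose_mat Z * Z) = G" "G \<in> carrier_mat p p"
  shows "transpose_mat X * pr_perp Z * X =
    transpose_mat X * X - (transpose_mat X * Z) * G * transpose_mat (transpose_mat X * Z)"
proof -
  have Xt: "transpose_mat X \<in> carrier_mat m n" and Zt: "transpose_mat Z \<in> carrier_mat p n"
    using X Z by auto
  have P: "Z * G * transpose_mat Z \<in> carrier_mat n n"
    using Z Zt G by (metis mult_carrier_mat)
  have "pr_perp Z = 1\<^sub>m n - Z * G * transpose_mat Z"
    using Z G by (simp add: pr_perp_def pr_mat_def)
  then have "transpose_mat X * pr_perp Z * X =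
      (transpose_mat X - transpose_mat X * (Z * G * transpose_mat Z)) * X"
    using Xt P by (simp add: mult_minus_distrib_mat[OF Xt one_carrier_mat P])
  also have "\<dots> = transpose_mat X * X - transpose_mat X * (Z * G * transpose_mat Z) * X"
    using X Xt P by (simp add: minus_mult_distrib_mat[OF Xt mult_carrier_mat[OF Xt P] X])
  also have "transpose_mat X * (Z * G * transpose_mat Z) * X =
      (transpose_mat X * Z) * G * (transpose_mat Z * X)"
  proof -
    have ZG: "Z * G \<in> carrier_mat n p" and ZtX: "transpose_mat Z * X \<in> carrier_mat p m"
      using X Z G Zt by auto
    show ?thesis
      by (simp only: assoc_mult_mat[OF Xt P X] assoc_mult_mat[OF ZG Zt X]
          assoc_mult_mat[OF Xt ZG ZtX, symmetric] assoc_mult_mat[OF Xt Z G(2)])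
  qed
  also have "transpose_mat Z * X = transpose_mat (transpose_mat X * Z)"
    using transpose_mult[OF Xt Z] by simp
  finally show ?thesis .
qed

section \<open>Circular neighbour-balanced designs\<close>

locale cnbd =
  fixes t b k l :: nat and d :: "nat \<Rightarrow> nat \<Rightarrow> nat"
  assumes k_ge_3: "3 \<le> k" and k_le_t: "k \<le> t" and b_pos: "0 < b"
    and l_eq: "real l = real (b * k) / real (t * (t - 1))"
    and is_CNBD: "CNBD t b k l d"
begin

definition T_ind :: "nat \<Rightarrow> nat \<Rightarrow> real" where
  "T_ind r a = (if d (r div k) (r mod k) = a then 1 else 0)"

definition L_ind :: "nat \<Rightarrow> nat \<Rightarrow> real" where
  "L_ind r a = (if left_nb k d (r div k) (r mod k) = a then 1 else 0)"

definition B_ind :: "nat \<Rightarrow> nat \<Rightarrow> real" where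
  "B_ind r i = (if r div k = i then 1 else 0)"

definition N_ind :: "nat \<Rightarrow> nat \<Rightarrow> real" where
  "N_ind i a = (if a \<in> d i ` {..<k} then 1 else 0)"

definition replication :: real where
  "replication = real b * real k / real t"

definition concurrence :: real where
  "concurrence = replication * (real k - 1) / (real t - 1)"

lemma k_pos: "0 < k"
  using k_ge_3 by simp

lemma t_ge_3: "3 \<le> t"
  using k_ge_3 k_le_t by simp

lemma treatment_lt: "i < b \<Longrightarrow> j < k \<Longrightarrow> d i j < t"
  using is_CNBD by (auto simp: CNBD_def design_def)

lemma inj_on_block: "i < b \<Longrightarrow> inj_on (d i) {..<k}"
  using is_CNBD by (auto simp: CNBD_def binary_design_def)

lemma replication_eq_l: "replication = real l * (real t - 1)"
proof -
  have "real (t * (t - 1)) = real t * (real t - 1)"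
    using t_ge_3 by simp
  then show ?thesis
    using t_ge_3 by (simp add: replication_def l_eq field_simps)
qed

lemma l_pos: "0 < real l"
  using l_eq b_pos k_ge_3 t_ge_3 by simp

lemma sum_left_nb: "(\<Sum>j<k. f (left_nb k d i j)) = (\<Sum>j<k. f (d i j) :: 'a :: comm_monoid_add)"
proof -
  have "left_nb k d i j = d i ((j + (k - 1)) mod k)" for j
    using k_pos by (simp add: left_nb_def)
  then show ?thesis
    using sum_rotate_mod[OF k_pos, of "\<lambda>j. f (d i j)" "k - 1"] by simp
qed

lemma left_nb_Suc: "j < k \<Longrightarrow> left_nb k d i (Suc j mod k) = d i j"
  by (cases "Suc j = k") (auto simp: left_nb_def)

lemma left_nb_neq: "i < b \<Longrightarrow> j < k \<Longrightarrow> left_nb k d i j \<noteq> d i j"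
proof -
  assume i: "i < b" and j: "j < k"
  have "(j + k - 1) mod k \<noteq> j"
    using j k_ge_3 by (cases j) auto
  then show ?thesis
    using inj_on_block[OF i] j k_pos unfolding left_nb_def inj_on_def
    by (metis lessThan_iff mod_less_divisor)
qed

lemma count_in_block_eq_N_ind: "i < b \<Longrightarrow> (\<Sum>j<k. if d i j = a then 1 else 0) = N_ind i a"
  unfolding N_ind_def using sum_if_eq_inj_on[OF inj_on_block, where 'b = real] by simp

lemma replication_count: "a < t \<Longrightarrow> (\<Sum>i<b. \<Sum>j<k. if d i j = a then 1 else 0) = replication"
proof -
  assume a: "a < t"
  have "balanced_block t b k d"
    using is_CNBD by (simp add: CNBD_def)
  then obtain r where r: "\<forall>a<t. card {(i, j). i < b \<and> j < k \<and> d i j = a} = r"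
    unfolding balanced_block_def by blast
  have count: "(\<Sum>i<b. \<Sum>j<k. if d i j = a then 1 else 0) = real r" if "a < t" for a
    using r that of_nat_card_pairs_eq_sum[of b k "\<lambda>i j. d i j = a", where 'a = real] by simp
  have "real t * real r = (\<Sum>a<t. \<Sum>i<b. \<Sum>j<k. if d i j = a then 1 else 0)"
    using count by simp
  also have "\<dots> = (\<Sum>i<b. \<Sum>j<k. \<Sum>a<t. if d i j = a then 1 else 0)"
    by (subst sum.swap, rule sum.cong[OF refl], rule sum.swap)
  also have "\<dots> = (\<Sum>i<b. \<Sum>j<k. 1)"
    using treatment_lt by (intro sum.cong) simp_all
  finally have "real t * real r = real b * real k"
    by simp
  then show ?thesis
    using count[OF a] t_ge_3 by (simp add: replication_def field_simps)
qed

lemma sum_N_ind_over_blocks: "a < t \<Longrightarrow> (\<Sum>i<b. N_ind i a) = replication"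
  using replication_count count_in_block_eq_N_ind by simp

lemma sum_N_ind_over_treatments: "i < b \<Longrightarrow> (\<Sum>a<t. N_ind i a) = real k"
proof -
  assume i: "i < b"
  have "(\<Sum>a<t. N_ind i a) = (\<Sum>a<t. \<Sum>j<k. if d i j = a then 1 else 0)"
    using count_in_block_eq_N_ind[OF i] by simp
  also have "\<dots> = (\<Sum>j<k. \<Sum>a<t. if d i j = a then 1 else 0)"
    by (rule sum.swap)
  finally show ?thesis
    using treatment_lt[OF i] by simp
qed

lemma sum_N_ind_N_ind:
  assumes a: "a < t" and c: "c < t"
  shows "(\<Sum>i<b. N_ind i a * N_ind i c) = (if a = c then replication else concurrence)"
proof -
  have "balanced_block t b k d"
    using is_CNBD by (simp add: CNBD_def)
  then obtain \<mu> where \<mu>: "\<forall>a<t. \<forall>c<t. a \<noteq> c \<longrightarrow>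
      card {i. i < b \<and> a \<in> d i ` {..<k} \<and> c \<in> d i ` {..<k}} = \<mu>"
    unfolding balanced_block_def by blast
  have off: "(\<Sum>i<b. N_ind i a * N_ind i c) = real \<mu>" if "a < t" "c < t" "a \<noteq> c" for a c
  proof -
    have "(\<Sum>i<b. N_ind i a * N_ind i c) =
        (\<Sum>i<b. if a \<in> d i ` {..<k} \<and> c \<in> d i ` {..<k} then 1 else 0)"
      by (intro sum.cong) (auto simp: N_ind_def)
    also have "\<dots> = real (card {i \<in> {..<b}. a \<in> d i ` {..<k} \<and> c \<in> d i ` {..<k}})"
      by (simp add: sum.inter_filter[symmetric])
    also have "{i \<in> {..<b}. a \<in> d i ` {..<k} \<and> c \<in> d i ` {..<k}} =
        {i. i < b \<and> a \<in> d i ` {..<k} \<and> c \<in> d i ` {..<k}}"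
      by auto
    finally show ?thesis
      using \<mu> that by simp
  qed
  have diag: "(\<Sum>i<b. N_ind i a * N_ind i a) = replication" if "a < t" for a
    using sum_N_ind_over_blocks[OF that] by (simp add: N_ind_def if_distrib[of "(*) _"] cong: if_cong)
  \<comment> \<open>Double counting the pairs (block meeting a, treatment in that block).\<close>
  have "(\<Sum>c<t. \<Sum>i<b. N_ind i a * N_ind i c) = (\<Sum>i<b. N_ind i a * (\<Sum>c<t. N_ind i c))"
    unfolding sum_distrib_left by (rule sum.swap)
  also have "\<dots> = (\<Sum>i<b. N_ind i a) * real k"
    unfolding sum_distrib_right by (intro sum.cong) (simp_all add: sum_N_ind_over_treatments)
  finally have "(\<Sum>c<t. \<Sum>i<b. N_ind i a * N_ind i c) = replication * real k"
    by (simp add: sum_N_ind_over_blocks[OF a])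
  moreover have "(\<Sum>c<t. \<Sum>i<b. N_ind i a * N_ind i c) =
      (\<Sum>c<t. (if c = a then replication - real \<mu> else 0) + real \<mu>)"
    using a by (intro sum.cong) (simp_all add: diag off)
  ultimately have "replication - real \<mu> + real t * real \<mu> = replication * real k"
    using a by (simp add: sum.distrib)
  then have "real \<mu> = concurrence"
    using t_ge_3 by (simp add: concurrence_def field_simps)
  then show ?thesis
    using off[OF a c] diag[OF a] by auto
qed

lemma sum_T_ind_T_ind:
  assumes "a < t"
  shows "(\<Sum>r<b * k. T_ind r a * T_ind r c) = (if a = c then replication else 0)"
proof -
  have "(\<Sum>r<b * k. T_ind r a * T_ind r c) =
      (\<Sum>i<b. \<Sum>j<k. if a = c then (if d i j = a then 1 else 0) else 0)"
    unfolding sum_lessThan_mult by (intro sum.cong) (auto simp: T_ind_def)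
  then show ?thesis
    using replication_count[OF assms] by (cases "a = c") simp_all
qed

lemma sum_L_ind_L_ind:
  assumes "a < t"
  shows "(\<Sum>r<b * k. L_ind r a * L_ind r c) = (if a = c then replication else 0)"
proof -
  define f where "f x = (if a = c then (if x = a then 1 else 0) else 0 :: real)" for x
  have "(\<Sum>r<b * k. L_ind r a * L_ind r c) = (\<Sum>i<b. \<Sum>j<k. f (left_nb k d i j))"
    unfolding sum_lessThan_mult by (intro sum.cong) (auto simp: L_ind_def f_def)
  also have "\<dots> = (\<Sum>i<b. \<Sum>j<k. f (d i j))"
    by (simp only: sum_left_nb)
  finally show ?thesis
    using replication_count[OF assms] by (cases "a = c") (simp_all add: f_def)
qed

lemma sum_T_ind_L_ind:
  assumes "a < t" and "c < t"
  shows "(\<Sum>r<b * k. T_ind r a * L_ind r c) = (if a = c then 0 else real l)"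
proof -
  have "(\<Sum>r<b * k. T_ind r a * L_ind r c) =
      (\<Sum>i<b. \<Sum>j<k. if d i j = a \<and> left_nb k d i j = c then 1 else 0)"
    unfolding sum_lessThan_mult by (intro sum.cong) (auto simp: T_ind_def L_ind_def)
  also have "\<dots> = (if a = c then 0 else real l)"
  proof (cases "a = c")
    case True
    then show ?thesis
      using left_nb_neq by (auto intro!: sum.neutral)
  next
    case False
    \<comment> \<open>Shifting each block by one plot turns left neighbours into right neighbours.\<close>
    have "(\<Sum>j<k. if d i j = a \<and> left_nb k d i j = c then 1 else 0) =
        (\<Sum>j<k. if d i j = c \<and> right_nb k d i j = a then 1 else (0 :: real))" for i
    proof -
      define g where "g j = (if d i j = a \<and> left_nb k d i j = c then 1 else (0 :: real))" for j
      have "(\<Sum>j<k. g j) = (\<Sum>j<k. g ((j + 1) mod k))"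
        by (rule sum_rotate_mod[OF k_pos, symmetric])
      also have "\<dots> = (\<Sum>j<k. if d i j = c \<and> right_nb k d i j = a then 1 else 0)"
        by (intro sum.cong) (auto simp: g_def left_nb_Suc right_nb_def)
      finally show ?thesis
        by (simp add: g_def)
    qed
    then have "(\<Sum>i<b. \<Sum>j<k. if d i j = a \<and> left_nb k d i j = c then 1 else 0) =
        (\<Sum>i<b. \<Sum>j<k. if d i j = c \<and> right_nb k d i j = a then 1 else (0 :: real))"
      by simp
    also have "\<dots> = real l"
      using is_CNBD assms False
      by (simp add: of_nat_card_pairs_eq_sum[symmetric] CNBD_def neighbor_balanced_def)
    finally show ?thesis
      using False by simp
  qed
  finally show ?thesis .
qed

lemma sum_B_ind_B_ind:
  assumes "i < b"
  shows "(\<Sum>r<b * k. B_ind r i * B_ind r i') = (if i = i' then real k else 0)"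
proof -
  have "(\<Sum>r<b * k. B_ind r i * B_ind r i') =
      (\<Sum>i''<b. if i'' = i then (if i = i' then real k else 0) else 0)"
    unfolding sum_lessThan_mult by (intro sum.cong) (auto simp: B_ind_def)
  then show ?thesis
    using assms by simp
qed

lemma sum_T_ind_B_ind:
  assumes "i < b"
  shows "(\<Sum>r<b * k. T_ind r a * B_ind r i) = N_ind i a"
proof -
  have "(\<Sum>r<b * k. T_ind r a * B_ind r i) =
      (\<Sum>i'<b. if i' = i then (\<Sum>j<k. if d i j = a then 1 else 0) else 0)"
    unfolding sum_lessThan_mult by (intro sum.cong) (auto simp: T_ind_def B_ind_def)
  then show ?thesis
    using assms count_in_block_eq_N_ind by simp
qed

lemma sum_L_ind_B_ind:
  assumes "i < b"
  shows "(\<Sum>r<b * k. L_ind r a * B_ind r i) = N_ind i a"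
proof -
  define f where "f x = (if x = a then 1 else 0 :: real)" for x
  have "(\<Sum>r<b * k. L_ind r a * B_ind r i) =
      (\<Sum>i'<b. if i' = i then (\<Sum>j<k. f (left_nb k d i j)) else 0)"
    unfolding sum_lessThan_mult by (intro sum.cong) (auto simp: L_ind_def B_ind_def f_def)
  also have "\<dots> = (\<Sum>i'<b. if i' = i then (\<Sum>j<k. f (d i j)) else 0)"
    by (simp only: sum_left_nb)
  finally show ?thesis
    using assms count_in_block_eq_N_ind by (simp add: f_def)
qed

lemma sum_diff_diff:
  assumes "a < t" and "c < t"
  shows "(\<Sum>r<b * k. (T_ind r a - L_ind r a) * (T_ind r c - L_ind r c)) =
    2 * real l * ((if a = c then real t else 0) - 1)"
proof -
  have "(\<Sum>r<b * k. (T_ind r a - L_ind r a) * (T_ind r c - L_ind r c)) =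
      (\<Sum>r<b * k. (T_ind r a * T_ind r c + L_ind r a * L_ind r c)
        - (T_ind r a * L_ind r c + T_ind r c * L_ind r a))"
    by (intro sum.cong) (simp_all add: algebra_simps)
  also have "\<dots> = (if a = c then 2 * replication else 0) - (if a = c then 0 else 2 * real l)"
    using assms by (simp add: sum_subtractf sum.distrib sum_T_ind_T_ind sum_L_ind_L_ind sum_T_ind_L_ind)
  also have "\<dots> = 2 * real l * ((if a = c then real t else 0) - 1)"
    by (simp add: replication_eq_l algebra_simps)
  finally show ?thesis .
qed

lemma sum_plus_diff:
  assumes "a < t" and "c < t"
  shows "(\<Sum>r<b * k. (T_ind r a + L_ind r a) * (T_ind r c - L_ind r c)) = 0"
proof -
  have "(\<Sum>r<b * k. (T_ind r a + L_ind r a) * (T_ind r c - L_ind r c)) =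
      (\<Sum>r<b * k. (T_ind r a * T_ind r c + T_ind r c * L_ind r a)
        - (T_ind r a * L_ind r c + L_ind r a * L_ind r c))"
    by (intro sum.cong) (simp_all add: algebra_simps)
  then show ?thesis
    using assms by (simp add: sum_subtractf sum.distrib sum_T_ind_T_ind sum_L_ind_L_ind sum_T_ind_L_ind)
qed

lemma sum_plus_plus:
  assumes "a < t" and "c < t"
  shows "(\<Sum>r<b * k. (T_ind r a + L_ind r a) * (T_ind r c + L_ind r c)) =
    2 * (if a = c then replication else real l)"
proof -
  have "(\<Sum>r<b * k. (T_ind r a + L_ind r a) * (T_ind r c + L_ind r c)) =
      (\<Sum>r<b * k. (T_ind r a * T_ind r c + L_ind r a * L_ind r c)
        + (T_ind r a * L_ind r c + T_ind r c * L_ind r a))"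
    by (intro sum.cong) (simp_all add: algebra_simps)
  then show ?thesis
    using assms by (simp add: sum.distrib sum_T_ind_T_ind sum_L_ind_L_ind sum_T_ind_L_ind)
qed

lemma sum_diff_B_ind: "i < b \<Longrightarrow> (\<Sum>r<b * k. (T_ind r a - L_ind r a) * B_ind r i) = 0"
  by (simp add: left_diff_distrib sum_subtractf sum_T_ind_B_ind sum_L_ind_B_ind)

lemma sum_plus_B_ind: "i < b \<Longrightarrow> (\<Sum>r<b * k. (T_ind r a + L_ind r a) * B_ind r i) = 2 * N_ind i a"
  by (simp add: distrib_right sum.distrib sum_T_ind_B_ind sum_L_ind_B_ind)

definition X1 :: "real mat" where
  "X1 = mat (b * k) t (\<lambda>(r, a). (T_ind r a + L_ind r a) / 2)"

definition X2 :: "real mat" where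
  "X2 = mat (b * k) (2 * t + b) (\<lambda>(r, p).
     if p < 2 * t then block_sign t p * (T_ind r (p mod t) - L_ind r (p mod t)) / 2
     else B_ind r (p - 2 * t))"

lemma X1_carrier: "X1 \<in> carrier_mat (b * k) t"
  by (simp add: X1_def)

lemma X2_carrier: "X2 \<in> carrier_mat (b * k) (2 * t + b)"
  by (simp add: X2_def)

definition A :: "real mat" where
  "A = hcat (T_mat t b k d) (L_mat t b k d)"

lemma A_carrier: "A \<in> carrier_mat (b * k) (2 * t)"
  by (intro carrier_matI) (simp_all add: A_def T_mat_def L_mat_def)

lemma index_A:
  "r < b * k \<Longrightarrow> p < 2 * t \<Longrightarrow> A $$ (r, p) = (if p < t then T_ind r p else L_ind r (p - t))"
  by (simp add: A_def T_mat_def L_mat_def T_ind_def L_ind_def)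

lemma A_mult_K_half: "A * K_mat t * ((1 / 2) \<cdot>\<^sub>m 1\<^sub>m t) = X1"
proof -
  have AK: "A * K_mat t \<in> carrier_mat (b * k) t"
    using A_carrier K_mat_carrier by auto
  have "A * K_mat t * ((1 / 2) \<cdot>\<^sub>m 1\<^sub>m t) = (1 / 2) \<cdot>\<^sub>m (A * K_mat t)"
    by (simp only: mult_smult_distrib[OF AK one_carrier_mat] right_mult_one_mat[OF AK])
  then show ?thesis
    unfolding mult_K_mat[OF A_carrier] by (intro eq_matI) (auto simp: X1_def index_A)
qed

lemma A_mult_M:
  "A * (1\<^sub>m (2 * t) - K_mat t * ((1 / 2) \<cdot>\<^sub>m 1\<^sub>m t) * transpose_mat (K_mat t)) =
    mat (b * k) (2 * t) (\<lambda>(r, q). block_sign t q * (T_ind r (q mod t) - L_ind r (q mod t)) / 2)"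
    (is "A * (_ - ?K * ?H * _) = ?D")
proof -
  have K: "?K \<in> carrier_mat (2 * t) t" and Kt: "transpose_mat ?K \<in> carrier_mat t (2 * t)"
    and H: "?H \<in> carrier_mat t t"
    using K_mat_carrier by auto
  have KH: "?K * ?H \<in> carrier_mat (2 * t) t"
    by (rule mult_carrier_mat[OF K H])
  have "A * (1\<^sub>m (2 * t) - ?K * ?H * transpose_mat ?K) = A - X1 * transpose_mat ?K"
    by (simp only: mult_minus_distrib_mat[OF A_carrier one_carrier_mat mult_carrier_mat[OF KH Kt]]
        right_mult_one_mat[OF A_carrier] assoc_mult_mat[OF A_carrier KH Kt, symmetric]
        assoc_mult_mat[OF A_carrier K H, symmetric] A_mult_K_half)
  also have "\<dots> = ?D"
  proof (rule eq_matI)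
    fix r q assume "r < dim_row ?D" "q < dim_col ?D"
    then have r: "r < b * k" and q: "q < 2 * t" by auto
    have "(A - X1 * transpose_mat ?K) $$ (r, q) = A $$ (r, q) - X1 $$ (r, q mod t)"
      using r q A_carrier by (simp add: mult_transpose_K_mat[OF X1_carrier])
    moreover have "q mod t = (if q < t then q else q - t)"
      using q by (simp add: le_mod_geq)
    ultimately show "(A - X1 * transpose_mat ?K) $$ (r, q) = ?D $$ (r, q)"
      using r q by (cases "q < t") (simp_all add: index_A X1_def block_sign_def field_simps)
  qed (use A_carrier in \<open>auto simp: X1_def K_mat_def\<close>)
  finally show ?thesis .
qed

lemma info_matrix_eq: "info_matrix t b k d = transpose_mat X1 * pr_perp X2 * X1"
proof -
  have "mp_inv (transpose_mat (K_mat t) * K_mat t) = (1 / 2) \<cdot>\<^sub>m 1\<^sub>m t"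
    by (simp add: transpose_K_mat_mult_K_mat mp_inv_smult_one)
  moreover have "hcat (A * (1\<^sub>m (2 * t) - K_mat t * ((1 / 2) \<cdot>\<^sub>m 1\<^sub>m t) * transpose_mat (K_mat t)))
      (B_mat b k) = X2"
    unfolding A_mult_M by (intro eq_matI) (auto simp: X2_def B_mat_def B_ind_def)
  ultimately show ?thesis
    unfolding info_matrix_def Let_def A_def[symmetric] by (simp only: A_mult_K_half)
qed

lemma sum_X2_X2_mixed:
  assumes "p < 2 * t" and "2 * t \<le> q" and "q < 2 * t + b"
  shows "(\<Sum>r<b * k. X2 $$ (r, p) * X2 $$ (r, q)) = 0"
proof -
  have "(\<Sum>r<b * k. X2 $$ (r, p) * X2 $$ (r, q)) =
      block_sign t p / 2 * (\<Sum>r<b * k. (T_ind r (p mod t) - L_ind r (p mod t)) * B_ind r (q - 2 * t))"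
    unfolding sum_distrib_left using assms by (intro sum.cong) (auto simp: X2_def)
  then show ?thesis
    using assms by (simp add: sum_diff_B_ind)
qed

lemma gram_X2:
  "transpose_mat X2 * X2 = signed_block_mat t b (real l * real t / 2) (- real l / 2) (real k)"
    (is "_ = ?S")
proof (rule eq_matI)
  fix p q assume "p < dim_row ?S" "q < dim_col ?S"
  then have p: "p < 2 * t + b" and q: "q < 2 * t + b"
    by (auto simp: signed_block_mat_def)
  have "(transpose_mat X2 * X2) $$ (p, q) = (\<Sum>r<b * k. X2 $$ (r, p) * X2 $$ (r, q))"
    using p q by (subst index_transpose_mult_sum) (auto simp: X2_def)
  also have "\<dots> = ?S $$ (p, q)"
  proof (cases "p < 2 * t"; cases "q < 2 * t")
    assume pt: "p < 2 * t" and qt: "q < 2 * t"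
    define D where "D r a = T_ind r a - L_ind r a" for r a
    have "(\<Sum>r<b * k. X2 $$ (r, p) * X2 $$ (r, q)) =
        block_sign t p * block_sign t q / 4 * (\<Sum>r<b * k. D r (p mod t) * D r (q mod t))"
      unfolding sum_distrib_left using p q pt qt by (intro sum.cong) (auto simp: X2_def D_def)
    also have "\<dots> = block_sign t p * block_sign t q / 4 *
        (2 * real l * ((if p mod t = q mod t then real t else 0) - 1))"
      using t_ge_3 by (simp add: D_def sum_diff_diff)
    also have "\<dots> = ?S $$ (p, q)"
      using p q pt qt by (simp add: signed_block_mat_def algebra_simps)
    finally show ?thesis .
  next
    assume "p < 2 * t" and "\<not> q < 2 * t"
    then show ?thesis
      using p q by (simp add: sum_X2_X2_mixed signed_block_mat_def)
  next
    assume "\<not> p < 2 * t" and "q < 2 * t"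
    then show ?thesis
      using p q sum_X2_X2_mixed[of q p] by (simp add: mult.commute signed_block_mat_def)
  next
    assume pt: "\<not> p < 2 * t" and qt: "\<not> q < 2 * t"
    have "(\<Sum>r<b * k. X2 $$ (r, p) * X2 $$ (r, q)) =
        (\<Sum>r<b * k. B_ind r (p - 2 * t) * B_ind r (q - 2 * t))"
      using p q pt qt by (intro sum.cong) (auto simp: X2_def)
    then show ?thesis
      using p q pt qt by (auto simp: sum_B_ind_B_ind signed_block_mat_def)
  qed
  finally show "(transpose_mat X2 * X2) $$ (p, q) = ?S $$ (p, q)" .
qed (auto simp: X2_def signed_block_mat_def)

definition W :: "real mat" where
  "W = mat t (2 * t + b) (\<lambda>(a, p). if p < 2 * t then 0 else N_ind (p - 2 * t) a)"

lemma W_carrier: "W \<in> carrier_mat t (2 * t + b)"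
  by (simp add: W_def)

lemma transpose_X1_mult_X2: "transpose_mat X1 * X2 = W"
  (is "_ = ?W")
proof (rule eq_matI)
  fix a p assume "a < dim_row ?W" "p < dim_col ?W"
  then have a: "a < t" and p: "p < 2 * t + b" by (auto simp: W_def)
  have "(transpose_mat X1 * X2) $$ (a, p) = (\<Sum>r<b * k. X1 $$ (r, a) * X2 $$ (r, p))"
    using a p by (subst index_transpose_mult_sum) (auto simp: X1_def X2_def)
  also have "\<dots> = ?W $$ (a, p)"
  proof (cases "p < 2 * t")
    case True
    have "(\<Sum>r<b * k. X1 $$ (r, a) * X2 $$ (r, p)) =
        block_sign t p / 4 *
          (\<Sum>r<b * k. (T_ind r a + L_ind r a) * (T_ind r (p mod t) - L_ind r (p mod t)))"
      unfolding sum_distrib_left using True a p by (intro sum.cong) (auto simp: X1_def X2_def)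
    then show ?thesis
      using True a p t_ge_3 by (simp add: sum_plus_diff W_def)
  next
    case False
    have "(\<Sum>r<b * k. X1 $$ (r, a) * X2 $$ (r, p)) =
        1 / 2 * (\<Sum>r<b * k. (T_ind r a + L_ind r a) * B_ind r (p - 2 * t))"
      unfolding sum_distrib_left using False a p by (intro sum.cong) (auto simp: X1_def X2_def)
    then show ?thesis
      using False a p by (simp add: sum_plus_B_ind W_def)
  qed
  finally show "(transpose_mat X1 * X2) $$ (a, p) = ?W $$ (a, p)" .
qed (auto simp: X1_def X2_def W_def)

lemma gram_X1:
  assumes "a < t" and "c < t"
  shows "(transpose_mat X1 * X1) $$ (a, c) = (if a = c then replication else real l) / 2"
proof -
  have "(transpose_mat X1 * X1) $$ (a, c) = (\<Sum>r<b * k. X1 $$ (r, a) * X1 $$ (r, c))"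
    using assms by (subst index_transpose_mult_sum) (auto simp: X1_def)
  also have "\<dots> = 1 / 4 * (\<Sum>r<b * k. (T_ind r a + L_ind r a) * (T_ind r c + L_ind r c))"
    unfolding sum_distrib_left using assms by (intro sum.cong) (auto simp: X1_def)
  finally show ?thesis
    using assms by (simp add: sum_plus_plus)
qed

lemma info_matrix_reduced:
  "info_matrix t b k d = transpose_mat X1 * X1 - (1 / real k) \<cdot>\<^sub>m (W * transpose_mat W)"
proof -
  define \<nu> where "\<nu> = real l * real t / 2"
  define G where "G = signed_block_mat t b (1 / (4 * \<nu>)) (- 1 / (4 * \<nu> * real t)) (1 / real k)"
  have t: "0 < t" using t_ge_3 by simp
  have G: "G \<in> carrier_mat (2 * t + b) (2 * t + b)"
    by (simp add: G_def signed_block_mat_carrier)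
  have S: "transpose_mat X2 * X2 = signed_block_mat t b \<nu> (- \<nu> / real t) (real k)"
    using t by (simp add: gram_X2 \<nu>_def)
  have G_inv: "mp_inv (transpose_mat X2 * X2) = G"
    unfolding S G_def using t l_pos k_ge_3
    by (intro mp_inv_eqI penrose_inverse_signed_block_mat) (simp_all add: \<nu>_def)
  \<comment> \<open>X1 is orthogonal to the columns (T - L)/2 of X2, so only the block part of G survives.\<close>
  have "W * G = (1 / real k) \<cdot>\<^sub>m W"
    unfolding G_def by (rule mult_signed_block_mat_zero_cols[OF W_carrier]) (simp add: W_def)
  then show ?thesis
    using W_carrier
    by (simp add: info_matrix_eq transpose_mult_pr_perp_mult[OF X1_carrier X2_carrier G_inv G]
        transpose_X1_mult_X2 mult_smult_assoc_mat[of W t "2 * t + b"])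
qed

lemma index_W_mult_transpose_W:
  assumes a: "a < t" and c: "c < t"
  shows "(W * transpose_mat W) $$ (a, c) = (\<Sum>i<b. N_ind i a * N_ind i c)"
proof -
  have "(W * transpose_mat W) $$ (a, c) = (\<Sum>p<2 * t + b. W $$ (a, p) * W $$ (c, p))"
    using W_carrier a c by (subst index_mult_mat_sum) auto
  also have "\<dots> = (\<Sum>p<2 * t. W $$ (a, p) * W $$ (c, p)) +
      (\<Sum>i<b. W $$ (a, 2 * t + i) * W $$ (c, 2 * t + i))"
    by (rule sum_lessThan_add)
  finally show ?thesis
    using a c by (simp add: W_def)
qed

lemma info_matrix_coefficients:
  defines "c \<equiv> real (b * (k - 2)) / (2 * real (t - 1))"
  shows "replication / 2 - replication / real k = c * (1 - 1 / real t)"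
    and "real l / 2 - concurrence / real k = c * (0 - 1 / real t)"
proof -
  define u where "u = real t - 1"
  have t: "real t \<noteq> 0" "u \<noteq> 0" and k: "real k \<noteq> 0"
    using t_ge_3 k_ge_3 by (auto simp: u_def)
  have c: "c = real b * (real k - 2) / (2 * u)"
    using t_ge_3 k_ge_3 by (simp add: c_def of_nat_diff u_def)
  have "replication / 2 - replication / real k = real b * (real k - 2) / (2 * real t)"
    unfolding replication_def using t k by (simp add: field_simps)
  also have "\<dots> = c * (u / real t)"
    unfolding c using t by (simp add: field_simps)
  also have "u / real t = 1 - 1 / real t"
    using t by (simp add: u_def field_simps)
  finally show "replication / 2 - replication / real k = c * (1 - 1 / real t)" .
  have "real l = real b * real k / (real t * u)"
    using t_ge_3 by (simp add: l_eq u_def)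
  then show "real l / 2 - concurrence / real k = c * (0 - 1 / real t)"
    unfolding c concurrence_def replication_def u_def[symmetric] using t k by (simp add: field_simps)
qed

lemma info_matrix_CNBD:
  "info_matrix t b k d =
    (real (b * (k - 2)) / (2 * real (t - 1))) \<cdot>\<^sub>m (1\<^sub>m t - (1 / real t) \<cdot>\<^sub>m J_mat t)"
    (is "_ = ?C")
proof (rule eq_matI)
  fix a c assume "a < dim_row ?C" and "c < dim_col ?C"
  then have a: "a < t" and c: "c < t"
    by (auto simp: J_mat_def)
  have "info_matrix t b k d $$ (a, c) =
      (transpose_mat X1 * X1) $$ (a, c) - (W * transpose_mat W) $$ (a, c) / real k"
    using a c W_carrier X1_carrier by (simp add: info_matrix_reduced del: index_mult_mat(1))
  also have "\<dots> = (if a = c then replication else real l) / 2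
      - (if a = c then replication else concurrence) / real k"
    using a c by (simp add: gram_X1 index_W_mult_transpose_W sum_N_ind_N_ind)
  finally show "info_matrix t b k d $$ (a, c) = ?C $$ (a, c)"
    using a c info_matrix_coefficients by (simp add: J_mat_def)
qed (simp_all add: info_matrix_eq X1_def J_mat_def)

end

theorem lemma4:
  fixes t b k l :: nat and d :: "nat \<Rightarrow> nat \<Rightarrow> nat"
  assumes "3 \<le> k" and "k \<le> t" and "0 < b"
    and "real l = real (b * k) / real (t * (t - 1))"
    and "CNBD t b k l d"
  shows "info_matrix t b k d =
    (real (b * (k - 2)) / (2 * real (t - 1))) \<cdot>\<^sub>m (1\<^sub>m t - (1 / real t) \<cdot>\<^sub>m J_mat t)"
proof -
  interpret cnbd t b k l d
    using assms by unfold_locales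
  show ?thesis
    by (rule info_matrix_CNBD)
qed

end
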